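(* Let $S=\mathbb{K}[x_1,\dots,x_n]$ be a polynomial ring over a field $\mathbb{K}$, and let $\mathcal{C}$ be a clutter whose vertex set is a subset of $\{x_1,\dots,x_n\}$, with edge ideal $I(\mathcal{C})\subset S$, and let $M=S/I(\mathcal{C})$. Then there is a chain $0=M_0\subset M_1\subset\cdots\subset M_m=M$ of $\mathbb{Z}^n$-graded submodules such that for each $i$, $M_i/M_{i-1}\cong (S/P_i)(-\mathbf{a}_i)$ where $P_i$ is a monomial prime ideal with $\dim(S/P_i)\ge \epsilon(\mathcal{C})+n-|V(\mathcal{C}^{\mathrm{red}})|$ and $\mathbf{a}_i\in\{0,1\}^n$ is a squarefree vector.
   Context: A clutter $\mathcal{C}$ consists of a finite vertex set $V(\mathcal{C})$ and a collection $E(\mathcal{C})$ of subsets of $V(\mathcal{C})$ (edges), no edge containing another. Vertices are identified with variables; the edge ideal is $I(\mathcal{C})=(\prod_{x\in e}x : e\in E(\mathcal{C}))$. Two distinct vertices are neighbors if some edge contains both. A vertex is isolated if it lies in no edge; $\mathcal{C}^{\mathrm{red}}$ is the clutter obtained by removing isolated vertices. An edge is trivial if it has exactly one vertex. A set $F\subseteq E(\mathcal{C})$ is edgewise dominant if every vertex $v\in V(\mathcal{C}^{\mathrm{red}})$ that is neither contained in an edge of $F$ nor contained in a trivial edge has a neighbor contained in some edge of $F$; $\epsilon(\mathcal{C})=\min\{|F| : F\subseteq E(\mathcal{C}) \text{ edgewise dominant}\}$. *)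

theory Defs
  imports Main "HOL-Library.Poly_Mapping" "HOL-Library.Extended_Nat"
begin

(* The polynomial ring S = K[x_j : j in 'n] in n = CARD('n) variables indexed by a finite
  type 'n. *)

type_synonym ('n, 'k) mpoly = "('n \<Rightarrow>\<^sub>0 nat) \<Rightarrow>\<^sub>0 'k"

definition var :: "'n \<Rightarrow> ('n, 'k::field) mpoly" where
  "var j = Poly_Mapping.single (Poly_Mapping.single j 1) 1"

definition monom :: "('n \<Rightarrow>\<^sub>0 nat) \<Rightarrow> ('n, 'k::field) mpoly" where
  "monom u = Poly_Mapping.single u 1"

definition is_ideal :: "('n, 'k::field) mpoly set \<Rightarrow> bool" where
  "is_ideal J \<longleftrightarrow> 0 \<in> J \<and> (\<forall>f\<in>J. \<forall>g\<in>J. f + g \<in> J) \<and> (\<forall>r. \<forall>f\<in>J. r * f \<in> J)"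

definition ideal_gen :: "('n, 'k::field) mpoly set \<Rightarrow> ('n, 'k) mpoly set" where
  "ideal_gen G = \<Inter>{J. is_ideal J \<and> G \<subseteq> J}"

definition is_prime_ideal :: "('n, 'k::field) mpoly set \<Rightarrow> bool" where
  "is_prime_ideal P \<longleftrightarrow> is_ideal P \<and> P \<noteq> UNIV \<and> (\<forall>a b. a * b \<in> P \<longrightarrow> a \<in> P \<or> b \<in> P)"

definition monomial_ideal :: "('n, 'k::field) mpoly set \<Rightarrow> bool" where
  "monomial_ideal J \<longleftrightarrow> (\<exists>G \<subseteq> range monom. J = ideal_gen G)"

definition monomial_prime :: "('n, 'k::field) mpoly set \<Rightarrow> bool" where
  "monomial_prime P \<longleftrightarrow> is_prime_ideal P \<and> monomial_ideal P"

definition graded_ideal :: "('n, 'k::field) mpoly set \<Rightarrow> bool" where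
  "graded_ideal J \<longleftrightarrow> is_ideal J \<and>
     (\<forall>f\<in>J. \<forall>u\<in>Poly_Mapping.keys f. Poly_Mapping.single u (Poly_Mapping.lookup f u) \<in> J)"

definition homogeneous_of :: "('n, 'k::field) mpoly \<Rightarrow> ('n \<Rightarrow>\<^sub>0 nat) \<Rightarrow> bool" where
  "homogeneous_of f d \<longleftrightarrow> Poly_Mapping.keys f \<subseteq> {d}"

(* graded_quot_iso Jp J P a: J \<subseteq> J' and the quotient J'/J is isomorphic, as a
  Z^n-graded S-module, to the shifted module (S/P)(-a).  Expressed via a map
  phi : J' \<rightarrow> S inducing an S-linear map J' \<rightarrow> S/P which is surjective, has kernel exactly J
  (hence induces an isomorphism J'/J \<cong> S/P), and sends elements of multidegree d into the
  multidegree-d component of (S/P)(-a), i.e. into the image of S_{d-a} (zero if d \<not>\<ge> a). *)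

definition graded_quot_iso ::
  "('n, 'k::field) mpoly set \<Rightarrow> ('n, 'k) mpoly set \<Rightarrow> ('n, 'k) mpoly set \<Rightarrow> ('n \<Rightarrow>\<^sub>0 nat) \<Rightarrow> bool" where
  "graded_quot_iso J' J P a \<longleftrightarrow> J \<subseteq> J' \<and>
     (\<exists>\<phi>. (\<forall>f\<in>J'. \<forall>g\<in>J'. \<phi> (f + g) = \<phi> f + \<phi> g)
        \<and> (\<forall>s. \<forall>f\<in>J'. \<phi> (s * f) - s * \<phi> f \<in> P)
        \<and> (\<forall>f\<in>J'. \<phi> f \<in> P \<longleftrightarrow> f \<in> J)
        \<and> (\<forall>g. \<exists>f\<in>J'. g - \<phi> f \<in> P)
        \<and> (\<forall>f\<in>J'. \<forall>d. homogeneous_of f d \<longrightarrow>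
              (\<exists>h. \<phi> f - h \<in> P \<and> (\<forall>u\<in>Poly_Mapping.keys h. u + a = d))))"

(* Krull dimension of S/P: supremum of lengths k of chains Q_0 \<subset> ... \<subset> Q_k of prime
  ideals of S containing P (these correspond to prime chains of S/P). *)

definition prime_chain :: "(nat \<Rightarrow> ('n, 'k::field) mpoly set) \<Rightarrow> nat \<Rightarrow> bool" where
  "prime_chain Q k \<longleftrightarrow> (\<forall>i\<le>k. is_prime_ideal (Q i)) \<and> (\<forall>i<k. Q i \<subset> Q (Suc i))"

definition dim_quot :: "('n, 'k::field) mpoly set \<Rightarrow> enat" where
  "dim_quot P = (SUP k \<in> {k. \<exists>Q. prime_chain Q k \<and> P \<subseteq> Q 0}. enat k)"

definition squarefree_vec :: "('n \<Rightarrow>\<^sub>0 nat) \<Rightarrow> bool" where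
  "squarefree_vec a \<longleftrightarrow> (\<forall>j. Poly_Mapping.lookup a j \<le> 1)"

(* Clutters on a vertex set V \<subseteq> 'n (vertices are identified with variables). *)

definition clutter :: "'n set \<Rightarrow> 'n set set \<Rightarrow> bool" where
  "clutter V E \<longleftrightarrow> (\<forall>e\<in>E. e \<subseteq> V) \<and> (\<forall>e1\<in>E. \<forall>e2\<in>E. e1 \<subseteq> e2 \<longrightarrow> e1 = e2)"

definition edge_monomial :: "'n set \<Rightarrow> ('n, 'k::field) mpoly" where
  "edge_monomial e = monom (\<Sum>j\<in>e. Poly_Mapping.single j 1)"

definition edge_ideal :: "'n set set \<Rightarrow> ('n, 'k::field) mpoly set" where
  "edge_ideal E = ideal_gen (edge_monomial ` E)"

(* Vertex set of the reduced clutter: the non-isolated vertices. *)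

definition red_vertices :: "'n set \<Rightarrow> 'n set set \<Rightarrow> 'n set" where
  "red_vertices V E = {v\<in>V. \<exists>e\<in>E. v \<in> e}"

definition neighbors :: "'n set set \<Rightarrow> 'n \<Rightarrow> 'n \<Rightarrow> bool" where
  "neighbors E u v \<longleftrightarrow> u \<noteq> v \<and> (\<exists>e\<in>E. u \<in> e \<and> v \<in> e)"

definition edgewise_dominant :: "'n set \<Rightarrow> 'n set set \<Rightarrow> 'n set set \<Rightarrow> bool" where
  "edgewise_dominant V E F \<longleftrightarrow> F \<subseteq> E \<and>
     (\<forall>v\<in>red_vertices V E. (\<not>(\<exists>e\<in>F. v \<in> e) \<and> \<not>(\<exists>e\<in>E. e = {v})) \<longrightarrow>
        (\<exists>u. neighbors E u v \<and> (\<exists>e\<in>F. u \<in> e)))"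

definition epsilon :: "'n set \<Rightarrow> 'n set set \<Rightarrow> nat" where
  "epsilon V E = (LEAST k. \<exists>F. edgewise_dominant V E F \<and> card F = k)"

end

theory Submission
  imports Defs
begin

text \<open>Splitting a monomial ideal \<open>I\<close> along a variable \<open>x\<close> gives \<open>I \<subseteq> I + (x)\<close> with
  \<open>(I + (x)) / I \<cong> (S / (I : x))(-x)\<close>; recursing on \<open>I : x\<close> and \<open>I + (x)\<close>, starting from
  \<open>I(C)\<close>, all ideals met have the form \<open>(I(C) : x\<^sup>A) + (x\<^sub>b : b \<in> B)\<close>, and the recursion stops
  when such an ideal is generated by variables, hence is a prime \<open>P\<close>. Unwinding it yields a chain
  of squarefree monomial ideals from \<open>I(C)\<close> to \<open>S\<close> whose successive quotients are squarefree
  shifts of the \<open>S/P\<close> met at the leaves.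

  The splitting variable \<open>x\<close> is taken in an edge \<open>g\<close> avoiding \<open>B\<close>, with a second vertex of \<open>g\<close>
  as pivot, and every vertex moved into \<open>A\<close> remembers an edge through it. At a leaf these
  edges, together with one edge through each remaining free vertex, form an edgewise dominant
  set of at most \<open>|V(C^red)| - |gens P|\<close> edges; as \<open>dim S/P = n - |gens P|\<close>, this is the
  dimension bound.\<close>

section \<open>Polynomials and ideals\<close>

abbreviation lookup where "lookup \<equiv> Poly_Mapping.lookup"
abbreviation keys where "keys \<equiv> Poly_Mapping.keys"
abbreviation single where "single \<equiv> Poly_Mapping.single"

lemma poly_mapping_sum_single: "(\<Sum>w\<in>keys f. single w (lookup f w)) = f"
proof (rule poly_mapping_eqI)
  fix k
  show "lookup (\<Sum>w\<in>keys f. single w (lookup f w)) k = lookup f k"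
    by (simp add: Poly_Mapping.lookup_sum Poly_Mapping.lookup_single when_def in_keys_iff)
qed

lemma keys_add_nat: "keys ((v::'a \<Rightarrow>\<^sub>0 nat) + w) = keys v \<union> keys w"
  by (auto simp: in_keys_iff lookup_add)

lemma lookup_mult_keys:
  "lookup (p * q) k = (\<Sum>v\<in>keys p. \<Sum>w\<in>keys q. if v + w = k then lookup p v * lookup q w else 0)"
proof -
  have "p * q = (\<Sum>v\<in>keys p. single v (lookup p v)) * (\<Sum>w\<in>keys q. single w (lookup q w))"
    by (simp only: poly_mapping_sum_single)
  also have "\<dots> = (\<Sum>v\<in>keys p. \<Sum>w\<in>keys q. single (v + w) (lookup p v * lookup q w))"
    by (simp add: sum_product Poly_Mapping.mult_single)
  finally show ?thesis
    by (simp add: Poly_Mapping.lookup_sum Poly_Mapping.lookup_single when_def eq_commute)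
qed

lemma obtain_max_image:
  fixes r :: "'a \<Rightarrow> 'b::linorder"
  assumes "finite S" "S \<noteq> {}"
  obtains x where "x \<in> S" "\<And>y. y \<in> S \<Longrightarrow> r y \<le> r x"
proof -
  have "Max (r ` S) \<in> r ` S" using assms by simp
  then obtain x where "x \<in> S" "r x = Max (r ` S)" by auto
  then show thesis using that assms by simp
qed

lemma poly_mapping_mult_neq_zero:
  fixes r :: "'a::comm_monoid_add \<Rightarrow> 'b::{ordered_cancel_comm_monoid_add, linorder}"
    and p q :: "'a \<Rightarrow>\<^sub>0 'k::semiring_no_zero_divisors"
  assumes "inj r" and r_add: "\<And>v w. r (v + w) = r v + r w" and "p \<noteq> 0" "q \<noteq> 0"
  shows "p * q \<noteq> 0"
proof -
  obtain vp where vp: "vp \<in> keys p" "\<And>v. v \<in> keys p \<Longrightarrow> r v \<le> r vp"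
    using obtain_max_image[of "keys p" r] \<open>p \<noteq> 0\<close> by auto
  obtain wq where wq: "wq \<in> keys q" "\<And>w. w \<in> keys q \<Longrightarrow> r w \<le> r wq"
    using obtain_max_image[of "keys q" r] \<open>q \<noteq> 0\<close> by auto
  \<comment> \<open>the product of the r-leading terms cannot cancel\<close>
  have leading: "v + w = vp + wq \<longleftrightarrow> w = wq \<and> v = vp" if "v \<in> keys p" "w \<in> keys q" for v w
  proof
    assume "v + w = vp + wq"
    then have "r v + r w = r vp + r wq" by (simp flip: r_add)
    moreover have "r v \<le> r vp" "r w \<le> r wq" using that vp wq by auto
    ultimately have "r v = r vp" "r w = r wq"
      by (metis add_less_le_mono add_le_less_mono order.not_eq_order_implies_strict less_irrefl)+
    then show "w = wq \<and> v = vp" using \<open>inj r\<close> by (simp add: inj_eq)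
  qed simp
  have "lookup (p * q) (vp + wq) = lookup p vp * lookup q wq"
    by (simp add: lookup_mult_keys leading if_if_eq_conj[symmetric] vp wq cong: sum.cong)
  then show ?thesis using vp(1) wq(1) by (auto simp: in_keys_iff)
qed

lemma mpoly_mult_neq_zero:
  fixes p q :: "('n::finite, 'k::field) mpoly"
  assumes "p \<noteq> 0" "q \<noteq> 0"
  shows "p * q \<noteq> 0"
proof -
  obtain idx :: "'n \<Rightarrow> nat" where "inj idx"
    using finite_imp_inj_to_nat_seg[of "UNIV :: 'n set"] by auto
  define r :: "('n \<Rightarrow>\<^sub>0 nat) \<Rightarrow> (nat \<Rightarrow>\<^sub>0 nat)"
    where "r v = (\<Sum>j\<in>UNIV. single (idx j) (lookup v j))" for v
  have lookup_r: "lookup (r v) (idx k) = lookup v k" for v k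
    using \<open>inj idx\<close> by (simp add: r_def Poly_Mapping.lookup_sum Poly_Mapping.lookup_single when_def inj_eq)
  have "inj r"
    by (rule injI, rule poly_mapping_eqI) (metis lookup_r)
  moreover have "r (v + w) = r v + r w" for v w
    by (simp add: r_def lookup_add Poly_Mapping.single_add sum.distrib)
  ultimately show ?thesis using poly_mapping_mult_neq_zero assms by blast
qed

lemma is_ideal_sum:
  assumes "is_ideal J" "\<And>x. x \<in> A \<Longrightarrow> h x \<in> J"
  shows "sum h A \<in> J"
  using assms(2) by (induction A rule: infinite_finite_induct) (use assms(1) in \<open>auto simp: is_ideal_def\<close>)

lemma is_ideal_add: "is_ideal J \<Longrightarrow> f \<in> J \<Longrightarrow> g \<in> J \<Longrightarrow> f + g \<in> J"
  unfolding is_ideal_def by blast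

lemma is_ideal_mult: "is_ideal J \<Longrightarrow> f \<in> J \<Longrightarrow> r * f \<in> J"
  unfolding is_ideal_def by blast

lemma is_ideal_diff:
  assumes "is_ideal J" "f \<in> J" "g \<in> J"
  shows "f - g \<in> J"
  using is_ideal_add[OF assms(1,2) is_ideal_mult[OF assms(1,3), of "-1"]] by simp

lemma single_mult_monom: "single v c * monom u = single (v + u) c"
  by (simp add: monom_def Poly_Mapping.mult_single)

lemma ideal_gen_least: "is_ideal J \<Longrightarrow> G \<subseteq> J \<Longrightarrow> ideal_gen G \<subseteq> J"
  unfolding ideal_gen_def by blast

definition char_vec :: "'n set \<Rightarrow> 'n \<Rightarrow>\<^sub>0 nat" where
  "char_vec U = (\<Sum>j\<in>U. single j 1)"

lemma lookup_char_vec: "finite U \<Longrightarrow> lookup (char_vec U) j = (if j \<in> U then 1 else 0)"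
  by (simp add: char_vec_def Poly_Mapping.lookup_sum Poly_Mapping.lookup_single when_def)

lemma keys_char_vec: "finite U \<Longrightarrow> keys (char_vec U) = U"
  by (auto simp: in_keys_iff lookup_char_vec split: if_splits)

lemma keys_add_char_vec: "finite U \<Longrightarrow> keys (v + char_vec U) = keys v \<union> U"
  by (simp add: keys_add_nat keys_char_vec)

lemma diff_add_char_vec: "finite U \<Longrightarrow> U \<subseteq> keys w \<Longrightarrow> w - char_vec U + char_vec U = w"
  by (rule poly_mapping_eqI) (auto simp: lookup_add lookup_minus lookup_char_vec in_keys_iff)

lemma squarefree_vec_char_vec: "finite U \<Longrightarrow> squarefree_vec (char_vec U)"
  by (simp add: squarefree_vec_def lookup_char_vec)

section \<open>Squarefree monomial ideals\<close>

definition covers :: "'n set set \<Rightarrow> 'n set \<Rightarrow> bool" where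
  "covers G X \<longleftrightarrow> (\<exists>g\<in>G. g \<subseteq> X)"

lemma covers_mono: "covers G X \<Longrightarrow> X \<subseteq> Y \<Longrightarrow> covers G Y"
  unfolding covers_def by blast

lemma covers_insert: "covers (insert U G) X \<longleftrightarrow> U \<subseteq> X \<or> covers G X"
  unfolding covers_def by blast

lemma covers_Un: "covers (G \<union> H) X \<longleftrightarrow> covers G X \<or> covers H X"
  unfolding covers_def by blast

lemma covers_image: "covers (f ` G) X \<longleftrightarrow> (\<exists>g\<in>G. f g \<subseteq> X)"
  unfolding covers_def by blast

text \<open>The squarefree monomial ideal generated by the monomials \<open>x\<^sup>g\<close>, \<open>g \<in> G\<close>, described
  by its monomials: those whose support contains some \<open>g\<close>.\<close>

definition sqfree_ideal :: "'n set set \<Rightarrow> ('n, 'k::field) mpoly set" where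
  "sqfree_ideal G = {f. \<forall>w\<in>keys f. covers G (keys w)}"

lemma is_ideal_sqfree_ideal: "is_ideal (sqfree_ideal G :: ('n, 'k::field) mpoly set)"
  unfolding is_ideal_def
proof (intro conjI ballI allI)
  show "(0 :: ('n, 'k) mpoly) \<in> sqfree_ideal G" by (simp add: sqfree_ideal_def)
next
  fix f g :: "('n, 'k) mpoly" assume "f \<in> sqfree_ideal G" "g \<in> sqfree_ideal G"
  then show "f + g \<in> sqfree_ideal G"
    using Poly_Mapping.keys_add[of f g] unfolding sqfree_ideal_def by blast
next
  fix r f :: "('n, 'k) mpoly" assume f: "f \<in> sqfree_ideal G"
  show "r * f \<in> sqfree_ideal G"
    unfolding sqfree_ideal_def
  proof (intro CollectI ballI)
    fix w assume "w \<in> keys (r * f)"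
    then obtain v w' where "w = v + w'" "w' \<in> keys f" using Poly_Mapping.keys_mult by blast
    then show "covers G (keys w)"
      using f covers_mono unfolding sqfree_ideal_def by (fastforce simp: keys_add_nat)
  qed
qed

lemma graded_ideal_sqfree_ideal: "graded_ideal (sqfree_ideal G :: ('n, 'k::field) mpoly set)"
  unfolding graded_ideal_def sqfree_ideal_def using is_ideal_sqfree_ideal[of G]
  by (auto simp: sqfree_ideal_def)

lemma sqfree_ideal_mono:
  "G \<subseteq> G' \<Longrightarrow> (sqfree_ideal G :: ('n, 'k::field) mpoly set) \<subseteq> sqfree_ideal G'"
  unfolding sqfree_ideal_def covers_def by blast

lemma sqfree_ideal_eq_UNIV: "covers G {} \<Longrightarrow> (sqfree_ideal G :: ('n, 'k::field) mpoly set) = UNIV"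
  unfolding sqfree_ideal_def using covers_mono by blast

lemma sqfree_ideal_subset_ideal:
  assumes "\<forall>g\<in>G. finite g" and J: "is_ideal J" "monom ` char_vec ` G \<subseteq> J"
  shows "(sqfree_ideal G :: ('n, 'k::field) mpoly set) \<subseteq> J"
proof
  fix f :: "('n, 'k) mpoly" assume f: "f \<in> sqfree_ideal G"
  have "single w (lookup f w) \<in> J" if "w \<in> keys f" for w
  proof -
    have "covers G (keys w)" using f that by (simp add: sqfree_ideal_def)
    then obtain g where g: "g \<in> G" "g \<subseteq> keys w" unfolding covers_def by blast
    then have "w - char_vec g + char_vec g = w" using assms(1) by (simp add: diff_add_char_vec)
    then have "single w (lookup f w) = single (w - char_vec g) (lookup f w) * monom (char_vec g)"
      by (simp add: single_mult_monom)
    moreover have "monom (char_vec g) \<in> J" using J(2) g by blast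
    ultimately show ?thesis using is_ideal_mult[OF J(1)] by metis
  qed
  then have "(\<Sum>w\<in>keys f. single w (lookup f w)) \<in> J" by (rule is_ideal_sum[OF J(1)])
  then show "f \<in> J" by (simp only: poly_mapping_sum_single)
qed

lemma sqfree_ideal_eq_ideal_gen:
  assumes "\<forall>g\<in>G. finite g"
  shows "(sqfree_ideal G :: ('n, 'k::field) mpoly set) = ideal_gen (monom ` char_vec ` G)"
proof
  have "monom ` char_vec ` G \<subseteq> (sqfree_ideal G :: ('n, 'k) mpoly set)"
    using assms by (auto simp: sqfree_ideal_def covers_def monom_def keys_char_vec)
  then show "ideal_gen (monom ` char_vec ` G) \<subseteq> (sqfree_ideal G :: ('n, 'k) mpoly set)"
    by (rule ideal_gen_least[OF is_ideal_sqfree_ideal])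
  show "(sqfree_ideal G :: ('n, 'k) mpoly set) \<subseteq> ideal_gen (monom ` char_vec ` G)"
    unfolding ideal_gen_def using sqfree_ideal_subset_ideal[OF assms] by blast
qed

lemma edge_ideal_eq_sqfree_ideal: "edge_ideal E = (sqfree_ideal E :: ('n::finite, 'k::field) mpoly set)"
proof -
  have "edge_monomial ` E = (monom ` char_vec ` E :: ('n, 'k) mpoly set)"
    unfolding image_image edge_monomial_def char_vec_def ..
  then show ?thesis unfolding edge_ideal_def by (simp add: sqfree_ideal_eq_ideal_gen)
qed

definition var_ideal :: "'n set \<Rightarrow> ('n, 'k::field) mpoly set" where
  "var_ideal Q = sqfree_ideal ((\<lambda>j. {j}) ` Q)"

lemma mem_var_ideal: "f \<in> var_ideal Q \<longleftrightarrow> (\<forall>w\<in>keys f. keys w \<inter> Q \<noteq> {})"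
  unfolding var_ideal_def sqfree_ideal_def covers_def by auto

lemma var_ideal_mono: "Q \<subseteq> Q' \<Longrightarrow> (var_ideal Q :: ('n, 'k::field) mpoly set) \<subseteq> var_ideal Q'"
  unfolding var_ideal_def by (rule sqfree_ideal_mono) blast

lemma var_mem_var_ideal: "var j \<in> var_ideal Q \<longleftrightarrow> j \<in> Q"
  by (simp add: mem_var_ideal var_def)

definition set_vars_zero :: "'n set \<Rightarrow> ('n, 'k::field) mpoly \<Rightarrow> ('n, 'k) mpoly" where
  "set_vars_zero Q f = (\<Sum>w\<in>{w\<in>keys f. keys w \<inter> Q = {}}. single w (lookup f w))"

lemma lookup_set_vars_zero:
  "lookup (set_vars_zero Q f) w = (if keys w \<inter> Q = {} then lookup f w else 0)"
  by (auto simp: set_vars_zero_def Poly_Mapping.lookup_sum Poly_Mapping.lookup_single when_def in_keys_iff)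

lemma keys_set_vars_zero: "w \<in> keys (set_vars_zero Q f) \<Longrightarrow> keys w \<inter> Q = {}"
  by (auto simp: in_keys_iff lookup_set_vars_zero split: if_splits)

lemma diff_set_vars_zero_mem_var_ideal: "f - set_vars_zero Q f \<in> var_ideal Q"
  by (auto simp: mem_var_ideal in_keys_iff lookup_minus lookup_set_vars_zero)

lemma set_vars_zero_eq_0_iff: "set_vars_zero Q f = 0 \<longleftrightarrow> f \<in> var_ideal Q"
  by (auto simp: mem_var_ideal poly_mapping_eq_iff fun_eq_iff lookup_set_vars_zero in_keys_iff)

lemma keys_mult_set_vars_zero:
  "w \<in> keys (set_vars_zero Q f * set_vars_zero Q g) \<Longrightarrow> keys w \<inter> Q = {}"
proof -
  assume "w \<in> keys (set_vars_zero Q f * set_vars_zero Q g)"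
  then obtain v v' where "w = v + v'" "v \<in> keys (set_vars_zero Q f)" "v' \<in> keys (set_vars_zero Q g)"
    using Poly_Mapping.keys_mult by blast
  then show ?thesis by (simp add: keys_add_nat keys_set_vars_zero Int_Un_distrib2)
qed

lemma prime_var_ideal: "is_prime_ideal (var_ideal Q :: ('n::finite, 'k::field) mpoly set)"
  unfolding is_prime_ideal_def
proof (intro conjI allI impI)
  show ideal: "is_ideal (var_ideal Q :: ('n, 'k) mpoly set)"
    unfolding var_ideal_def by (rule is_ideal_sqfree_ideal)
  have "(1 :: ('n, 'k) mpoly) \<notin> var_ideal Q" by (simp add: mem_var_ideal)
  then show "var_ideal Q \<noteq> (UNIV :: ('n, 'k) mpoly set)" by blast
  fix a b :: "('n, 'k) mpoly"
  assume ab: "a * b \<in> var_ideal Q"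
  define a0 b0 where "a0 = set_vars_zero Q a" and "b0 = set_vars_zero Q b"
  have "a * b - a0 * b0 = b * (a - a0) + a0 * (b - b0)" by (simp add: algebra_simps)
  also have "\<dots> \<in> var_ideal Q"
    unfolding a0_def b0_def
    by (intro is_ideal_add[OF ideal] is_ideal_mult[OF ideal] diff_set_vars_zero_mem_var_ideal)
  finally have "a * b - (a * b - a0 * b0) \<in> var_ideal Q"
    by (rule is_ideal_diff[OF ideal ab])
  then have "a0 * b0 \<in> var_ideal Q" by simp
  then have "a0 * b0 = 0"
    using keys_mult_set_vars_zero unfolding a0_def b0_def mem_var_ideal
    by (metis Poly_Mapping.keys_eq_empty equals0I)
  then show "a \<in> var_ideal Q \<or> b \<in> var_ideal Q"
    using mpoly_mult_neq_zero set_vars_zero_eq_0_iff unfolding a0_def b0_def by blast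
qed

lemma monomial_prime_var_ideal: "monomial_prime (var_ideal Q :: ('n::finite, 'k::field) mpoly set)"
proof -
  have "(var_ideal Q :: ('n, 'k) mpoly set) = ideal_gen (monom ` char_vec ` (\<lambda>j. {j}) ` Q)"
    unfolding var_ideal_def by (rule sqfree_ideal_eq_ideal_gen) auto
  then show ?thesis
    unfolding monomial_prime_def monomial_ideal_def using prime_var_ideal by blast
qed

text \<open>Adjoining the variables outside \<open>Q\<close> one at a time gives a chain of primes over \<open>var_ideal Q\<close>.\<close>

lemma dim_quot_var_ideal:
  "enat (card (UNIV :: 'n set) - card Q) \<le> dim_quot (var_ideal Q :: ('n::finite, 'k::field) mpoly set)"
proof -
  obtain xs :: "'n list" where xs: "set xs = - Q" "distinct xs"
    using finite_distinct_list[of "- Q"] by auto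
  have len: "length xs = card (UNIV :: 'n set) - card Q"
    using xs distinct_card[of xs] by (simp add: Compl_eq_Diff_UNIV card_Diff_subset)
  define C where "C i = (var_ideal (Q \<union> set (take i xs)) :: ('n, 'k) mpoly set)" for i
  have "prime_chain C (length xs)"
    unfolding prime_chain_def
  proof (intro conjI allI impI)
    fix i show "is_prime_ideal (C i)" unfolding C_def by (rule prime_var_ideal)
  next
    fix i assume i: "i < length xs"
    then have take_Suc: "set (take (Suc i) xs) = insert (xs ! i) (set (take i xs))"
      by (simp add: take_Suc_conv_app_nth)
    have "distinct (take (Suc i) xs)" using xs(2) by simp
    then have "xs ! i \<notin> set (take i xs)" using i by (simp add: take_Suc_conv_app_nth)
    moreover have "xs ! i \<notin> Q" using xs(1) i nth_mem by fastforce
    ultimately have "var (xs ! i) \<in> C (Suc i) - C i"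
      unfolding C_def take_Suc by (simp add: var_mem_var_ideal)
    moreover have "C i \<subseteq> C (Suc i)" unfolding C_def take_Suc by (rule var_ideal_mono) blast
    ultimately show "C i \<subset> C (Suc i)" by blast
  qed
  moreover have "var_ideal Q \<subseteq> C 0" unfolding C_def by simp
  ultimately show ?thesis
    unfolding dim_quot_def len[symmetric] by (intro SUP_upper) blast
qed

section \<open>Filtrations with prime quotients\<close>

definition monom_quot :: "('n \<Rightarrow>\<^sub>0 nat) \<Rightarrow> ('n, 'k::field) mpoly \<Rightarrow> ('n, 'k) mpoly" where
  "monom_quot u f = Abs_poly_mapping (\<lambda>v. lookup f (v + u))"

lemma lookup_monom_quot: "lookup (monom_quot u f) v = lookup f (v + u)"
proof -
  have "{v. lookup f (v + u) \<noteq> 0} \<subseteq> (\<lambda>w. w - u) ` keys f"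
    by (force simp: in_keys_iff)
  then have "finite {v. lookup f (v + u) \<noteq> 0}" by (rule finite_subset) simp
  then show ?thesis unfolding monom_quot_def by simp
qed

lemma keys_monom_quot: "v \<in> keys (monom_quot u f) \<longleftrightarrow> v + u \<in> keys f"
  by (simp add: in_keys_iff lookup_monom_quot)

lemma monom_quot_add: "monom_quot u (f + g) = monom_quot u f + monom_quot u g"
  by (rule poly_mapping_eqI) (simp add: lookup_monom_quot lookup_add)

lemma lookup_mult_monom: "lookup (g * monom u) (v + u) = lookup g v"
  by (simp add: lookup_mult_keys monom_def in_keys_iff cong: if_cong)

lemma keys_mult_monom: "keys (g * monom u) = (\<lambda>v. v + u) ` keys g"
proof (intro equalityI subsetI)
  fix w assume "w \<in> keys (g * monom u)"
  then show "w \<in> (\<lambda>v. v + u) ` keys g"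
    using Poly_Mapping.keys_mult[of g "monom u"] lookup_mult_monom[of g u]
    by (force simp: monom_def in_keys_iff)
qed (auto simp: in_keys_iff lookup_mult_monom)

lemma monom_quot_mult_monom: "monom_quot u (g * monom u) = g"
  by (rule poly_mapping_eqI) (simp add: lookup_monom_quot lookup_mult_monom)

text \<open>The squarefree form of the colon ideal identity \<open>I(G) : x\<^sup>U = (x\<^sub>j : j \<in> Q)\<close>.\<close>

definition colon_eq_var_ideal :: "'n set set \<Rightarrow> 'n set \<Rightarrow> 'n set \<Rightarrow> bool" where
  "colon_eq_var_ideal G U Q \<longleftrightarrow> (\<forall>T. covers G (T \<union> U) \<longleftrightarrow> T \<inter> Q \<noteq> {})"

lemma mult_monom_mem_sqfree_ideal_iff:
  assumes "finite U" "colon_eq_var_ideal G U Q"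
  shows "g * monom (char_vec U) \<in> sqfree_ideal G \<longleftrightarrow> g \<in> var_ideal Q"
  using assms by (simp add: sqfree_ideal_def keys_mult_monom keys_add_char_vec mem_var_ideal
      colon_eq_var_ideal_def)

lemma monom_quot_mem_var_ideal:
  assumes "finite U" "colon_eq_var_ideal G U Q" "f \<in> sqfree_ideal G"
  shows "monom_quot (char_vec U) f \<in> var_ideal Q"
  unfolding mem_var_ideal
proof
  fix w assume "w \<in> keys (monom_quot (char_vec U) f)"
  then have "covers G (keys (w + char_vec U))"
    using assms(3) by (simp add: sqfree_ideal_def keys_monom_quot)
  then have "covers G (keys w \<union> U)" by (simp add: keys_add_char_vec[OF assms(1)])
  then show "keys w \<inter> Q \<noteq> {}" using assms(2) by (simp add: colon_eq_var_ideal_def)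
qed

lemma diff_monom_quot_mem_sqfree_ideal:
  assumes "finite U" "f \<in> sqfree_ideal (insert U G)"
  shows "f - monom_quot (char_vec U) f * monom (char_vec U) \<in> sqfree_ideal G"
  unfolding sqfree_ideal_def
proof (intro CollectI ballI)
  let ?u = "char_vec U"
  fix w assume w: "w \<in> keys (f - monom_quot ?u f * monom ?u)"
  have "\<not> U \<subseteq> keys w"
  proof
    assume "U \<subseteq> keys w"
    then have "w = (w - ?u) + ?u" using diff_add_char_vec[OF assms(1)] by simp
    then have "lookup (monom_quot ?u f * monom ?u) w = lookup f w"
      by (metis lookup_mult_monom lookup_monom_quot)
    then show False using w by (simp add: in_keys_iff lookup_minus)
  qed
  moreover from this have "w \<notin> keys (monom_quot ?u f * monom ?u)"
    by (auto simp: keys_mult_monom keys_add_char_vec[OF assms(1)])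
  then have "w \<in> keys f" using w by (auto simp: in_keys_iff lookup_minus)
  then have "covers (insert U G) (keys w)" using assms(2) by (simp add: sqfree_ideal_def)
  ultimately show "covers G (keys w)" by (simp add: covers_insert)
qed

lemma mult_monom_mem_sqfree_ideal_insert:
  "finite U \<Longrightarrow> g * monom (char_vec U) \<in> sqfree_ideal (insert U G)"
  by (auto simp: sqfree_ideal_def keys_mult_monom keys_add_char_vec covers_insert)

text \<open>Division by \<open>x\<^sup>U\<close> induces \<open>I(G \<union> {U}) / I(G) \<cong> (S / (I(G) : x\<^sup>U))(-U)\<close>.\<close>

lemma graded_quot_iso_sqfree_ideal:
  assumes U: "finite U" and colon: "colon_eq_var_ideal G U Q"
  shows "graded_quot_iso (sqfree_ideal (insert U G)) (sqfree_ideal G) (var_ideal Q :: ('n, 'k::field) mpoly set)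
           (char_vec U)"
  unfolding graded_quot_iso_def
proof (intro conjI exI[of _ "monom_quot (char_vec U)"] ballI allI impI)
  let ?u = "char_vec U"
  let ?J' = "sqfree_ideal (insert U G) :: ('n, 'k) mpoly set"
  let ?J = "sqfree_ideal G :: ('n, 'k) mpoly set"
  let ?P = "var_ideal Q :: ('n, 'k) mpoly set"
  have J: "is_ideal ?J" by (rule is_ideal_sqfree_ideal)
  have rest: "f - monom_quot ?u f * monom ?u \<in> ?J" if "f \<in> ?J'" for f
    using diff_monom_quot_mem_sqfree_ideal[OF U that] .
  show "?J \<subseteq> ?J'" by (rule sqfree_ideal_mono) blast
  fix f assume f: "f \<in> ?J'"
  show "monom_quot ?u (f + g) = monom_quot ?u f + monom_quot ?u g" for g
    by (rule monom_quot_add)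
  show "monom_quot ?u (s * f) - s * monom_quot ?u f \<in> ?P" for s
  proof -
    have "s * f = (s * monom_quot ?u f) * monom ?u + s * (f - monom_quot ?u f * monom ?u)"
      by (simp add: algebra_simps)
    then have "monom_quot ?u (s * f) - s * monom_quot ?u f
        = monom_quot ?u (s * (f - monom_quot ?u f * monom ?u))"
      by (simp add: monom_quot_add monom_quot_mult_monom)
    also have "\<dots> \<in> ?P"
      using monom_quot_mem_var_ideal[OF U colon] is_ideal_mult[OF J rest[OF f]] by blast
    finally show ?thesis .
  qed
  have "f \<in> ?J \<longleftrightarrow> monom_quot ?u f * monom ?u \<in> ?J"
    using is_ideal_diff[OF J _ rest[OF f]] is_ideal_add[OF J _ rest[OF f]] by fastforce
  then show "monom_quot ?u f \<in> ?P \<longleftrightarrow> f \<in> ?J"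
    using mult_monom_mem_sqfree_ideal_iff[OF U colon] by blast
  show "\<exists>h. monom_quot ?u f - h \<in> ?P \<and> (\<forall>v\<in>keys h. v + ?u = d)"
    if "homogeneous_of f d" for d
    using that by (intro exI[of _ "monom_quot ?u f"]) (auto simp: homogeneous_of_def keys_monom_quot mem_var_ideal)
next
  fix g :: "('n, 'k) mpoly"
  show "\<exists>f\<in>sqfree_ideal (insert U G). g - monom_quot (char_vec U) f \<in> var_ideal Q"
    using mult_monom_mem_sqfree_ideal_insert[OF U] monom_quot_mult_monom mem_var_ideal
    by (metis diff_self Poly_Mapping.keys_zero empty_iff)
qed

text \<open>\<open>prime_filtration G [(U\<^sub>1, Q\<^sub>1), \<dots>, (U\<^sub>m, Q\<^sub>m)]\<close>: adjoining \<open>x^U\<^sub>1, \<dots>, x^U\<^sub>m\<close> to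
  \<open>I(G)\<close> one at a time, each colon ideal is \<open>(x\<^sub>j : j \<in> Q\<^sub>i)\<close>, and the unit ideal is reached.\<close>

fun prime_filtration :: "'n set set \<Rightarrow> ('n set \<times> 'n set) list \<Rightarrow> bool" where
  "prime_filtration G [] \<longleftrightarrow> covers G {}"
| "prime_filtration G ((U, Q) # L) \<longleftrightarrow> colon_eq_var_ideal G U Q \<and> prime_filtration (insert U G) L"

lemma prime_filtration_cong:
  "(\<And>X. covers G X \<longleftrightarrow> covers G' X) \<Longrightarrow> prime_filtration G L \<longleftrightarrow> prime_filtration G' L"
proof (induction L arbitrary: G G')
  case (Cons a L)
  obtain U Q where a: "a = (U, Q)" by (cases a)
  have "covers (insert U G) X \<longleftrightarrow> covers (insert U G') X" for X
    using Cons.prems by (simp add: covers_insert)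
  then have "prime_filtration (insert U G) L \<longleftrightarrow> prime_filtration (insert U G') L"
    by (rule Cons.IH)
  then show ?case
    using Cons.prems by (simp add: a colon_eq_var_ideal_def)
qed simp

lemma prime_filtration_nth:
  assumes "prime_filtration G L" "i < length L"
  shows "colon_eq_var_ideal (G \<union> fst ` set (take i L)) (fst (L ! i)) (snd (L ! i))"
  using assms
proof (induction L arbitrary: G i)
  case (Cons a L)
  obtain U Q where a: "a = (U, Q)" by (cases a)
  show ?case
  proof (cases i)
    case (Suc j)
    then have "colon_eq_var_ideal (insert U G \<union> fst ` set (take j L)) (fst (L ! j)) (snd (L ! j))"
      using Cons.IH[of "insert U G" j] Cons.prems a Suc by simp
    then show ?thesis using a Suc by simp
  qed (use Cons.prems a in simp)
qed simp

lemma prime_filtration_covers_empty: "prime_filtration G L \<Longrightarrow> covers (G \<union> fst ` set L) {}"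
proof (induction L arbitrary: G)
  case (Cons a L)
  obtain U Q where "a = (U, Q)" by (cases a)
  then have "covers (insert U G \<union> fst ` set L) {}" using Cons.IH[of "insert U G"] Cons.prems by simp
  then show ?case using \<open>a = (U, Q)\<close> by simp
qed (simp add: covers_Un)

lemma colon_eq_var_ideal_insert:
  assumes "colon_eq_var_ideal ((\<lambda>g. g - {x}) ` G) U Q" "x \<notin> Q"
  shows "colon_eq_var_ideal G (insert x U) Q"
  unfolding colon_eq_var_ideal_def
proof
  fix T
  have "covers G (T \<union> insert x U) \<longleftrightarrow> covers ((\<lambda>g. g - {x}) ` G) ((T - {x}) \<union> U)"
    unfolding covers_image unfolding covers_def by blast
  also have "\<dots> \<longleftrightarrow> (T - {x}) \<inter> Q \<noteq> {}"
    using assms(1) unfolding colon_eq_var_ideal_def by blast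
  finally show "covers G (T \<union> insert x U) \<longleftrightarrow> T \<inter> Q \<noteq> {}" using assms(2) by blast
qed

text \<open>Splitting along a variable: a filtration of \<open>I(G) : x\<close> multiplied by \<open>x\<close>, followed by one
  of \<open>I(G) + (x)\<close>.\<close>

lemma prime_filtration_split:
  assumes "prime_filtration ((\<lambda>g. g - {x}) ` G) L1" "\<forall>(U, Q)\<in>set L1. x \<notin> U \<and> x \<notin> Q"
    and "prime_filtration (insert {x} G) L2"
  shows "prime_filtration G (map (\<lambda>(U, Q). (insert x U, Q)) L1 @ L2)"
  using assms
proof (induction L1 arbitrary: G)
  case Nil
  then obtain g where "g \<in> G" "g \<subseteq> {x}" by (auto simp: covers_def)
  then have "covers (insert {x} G) X \<longleftrightarrow> covers G X" for X
    unfolding covers_def by blast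
  then show ?case using Nil(3) prime_filtration_cong[of "insert {x} G" G L2] by simp
next
  case (Cons a L1)
  obtain U Q where a: "a = (U, Q)" by (cases a)
  then have x: "x \<notin> U" "x \<notin> Q" using Cons.prems(2) by auto
  have "(\<lambda>g. g - {x}) ` insert (insert x U) G = insert U ((\<lambda>g. g - {x}) ` G)"
    using x by auto
  then have "prime_filtration ((\<lambda>g. g - {x}) ` insert (insert x U) G) L1"
    using Cons.prems(1) a by simp
  moreover have "covers (insert {x} (insert (insert x U) G)) X \<longleftrightarrow> covers (insert {x} G) X" for X
    by (auto simp: covers_insert)
  then have "prime_filtration (insert {x} (insert (insert x U) G)) L2"
    using Cons.prems(3) prime_filtration_cong[of "insert {x} (insert (insert x U) G)" "insert {x} G" L2]
    by simp
  ultimately have "prime_filtration (insert (insert x U) G) (map (\<lambda>(U, Q). (insert x U, Q)) L1 @ L2)"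
    using Cons.IH Cons.prems(2) by simp
  moreover have "colon_eq_var_ideal G (insert x U) Q"
    using colon_eq_var_ideal_insert[of x G U Q] Cons.prems(1) a x by simp
  ultimately show ?case using a by simp
qed

lemma prime_filtration_graded_filtration:
  fixes G :: "'n::finite set set"
  assumes L: "prime_filtration G L"
  obtains J :: "nat \<Rightarrow> ('n, 'k::field) mpoly set"
  where "J 0 = sqfree_ideal G" "J (length L) = UNIV" "\<And>i. graded_ideal (J i)" "\<And>i. J i \<subseteq> J (Suc i)"
    "\<And>i. i < length L \<Longrightarrow>
       graded_quot_iso (J (Suc i)) (J i) (var_ideal (snd (L ! i))) (char_vec (fst (L ! i)))"
proof
  define J where "J i = (sqfree_ideal (G \<union> fst ` set (take i L)) :: ('n, 'k) mpoly set)" for i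
  show "J 0 = sqfree_ideal G" "J (length L) = UNIV"
    using prime_filtration_covers_empty[OF L] by (simp_all add: J_def sqfree_ideal_eq_UNIV)
  show "graded_ideal (J i)" for i
    unfolding J_def by (rule graded_ideal_sqfree_ideal)
  show "J i \<subseteq> J (Suc i)" for i
    unfolding J_def using set_take_subset_set_take[of i "Suc i" L] by (intro sqfree_ideal_mono) auto
  show "graded_quot_iso (J (Suc i)) (J i) (var_ideal (snd (L ! i))) (char_vec (fst (L ! i)))"
    if "i < length L" for i
  proof -
    have "J (Suc i) = sqfree_ideal (insert (fst (L ! i)) (G \<union> fst ` set (take i L)))"
      using that by (simp add: J_def take_Suc_conv_app_nth)
    then show ?thesis
      using graded_quot_iso_sqfree_ideal[OF finite prime_filtration_nth[OF L that]] by (simp add: J_def)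
  qed
qed

section \<open>The splitting recursion on a clutter\<close>

definition avoiding_edges :: "'n set set \<Rightarrow> 'n set \<Rightarrow> 'n set set" where
  "avoiding_edges E B = {g\<in>E. g \<inter> B = {}}"

text \<open>Generators of \<open>(I(E) : x\<^sup>A) + (x\<^sub>b : b \<in> B)\<close>; the edges meeting \<open>B\<close> are redundant.\<close>

definition colon_plus_gens :: "'n set set \<Rightarrow> 'n set \<Rightarrow> 'n set \<Rightarrow> 'n set set" where
  "colon_plus_gens E A B = (\<lambda>g. g - A) ` avoiding_edges E B \<union> (\<lambda>b. {b}) ` B"

definition linear_vars :: "'n set set \<Rightarrow> 'n set \<Rightarrow> 'n set \<Rightarrow> 'n set" where
  "linear_vars E A B = {v. \<exists>g\<in>avoiding_edges E B. g - A = {v}}"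

lemma colon_plus_gens_empty: "colon_plus_gens E {} {} = E"
  by (simp add: colon_plus_gens_def avoiding_edges_def)

lemma covers_colon_plus_gens:
  "covers (colon_plus_gens E A B) X \<longleftrightarrow> (\<exists>g\<in>avoiding_edges E B. g - A \<subseteq> X) \<or> B \<inter> X \<noteq> {}"
  unfolding colon_plus_gens_def covers_Un covers_image by auto

lemma colon_plus_gens_colon:
  assumes "x \<notin> B"
  shows "(\<lambda>g. g - {x}) ` colon_plus_gens E A B = colon_plus_gens E (insert x A) B"
proof -
  have "(\<lambda>g. g - {x}) ` (\<lambda>g. g - A) ` avoiding_edges E B = (\<lambda>g. g - insert x A) ` avoiding_edges E B"
    unfolding image_image by (intro image_cong) auto
  moreover have "(\<lambda>g. g - {x}) ` (\<lambda>b. {b}) ` B = (\<lambda>b. {b}) ` B"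
    unfolding image_image using assms by (intro image_cong) auto
  ultimately show ?thesis unfolding colon_plus_gens_def image_Un by simp
qed

lemma covers_colon_plus_gens_plus:
  assumes "x \<notin> A"
  shows "covers (insert {x} (colon_plus_gens E A B)) X \<longleftrightarrow> covers (colon_plus_gens E A (insert x B)) X"
proof -
  have "avoiding_edges E (insert x B) = {g\<in>avoiding_edges E B. x \<notin> g}"
    unfolding avoiding_edges_def by blast
  moreover have "g - A \<subseteq> X \<longleftrightarrow> g - A \<subseteq> X \<and> x \<notin> g \<or> x \<in> X \<and> g - A \<subseteq> X" for g
    using assms by blast
  ultimately show ?thesis
    unfolding covers_insert covers_colon_plus_gens by blast
qed

lemma colon_eq_var_ideal_colon_plus_gens:
  assumes "\<forall>g\<in>avoiding_edges E B. (g - A) \<inter> linear_vars E A B \<noteq> {}"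
  shows "colon_eq_var_ideal (colon_plus_gens E A B) {} (B \<union> linear_vars E A B)"
  unfolding colon_eq_var_ideal_def covers_colon_plus_gens Un_empty_right
proof (intro allI iffI)
  fix T
  assume "(\<exists>g\<in>avoiding_edges E B. g - A \<subseteq> T) \<or> B \<inter> T \<noteq> {}"
  then consider g where "g \<in> avoiding_edges E B" "g - A \<subseteq> T" | "B \<inter> T \<noteq> {}" by auto
  then show "T \<inter> (B \<union> linear_vars E A B) \<noteq> {}"
  proof cases
    case 1
    then show ?thesis using assms by blast
  qed blast
next
  fix T
  assume "T \<inter> (B \<union> linear_vars E A B) \<noteq> {}"
  then obtain v where v: "v \<in> T" "v \<in> B \<or> v \<in> linear_vars E A B" by blast
  show "(\<exists>g\<in>avoiding_edges E B. g - A \<subseteq> T) \<or> B \<inter> T \<noteq> {}"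
  proof (cases "v \<in> B")
    case False
    then obtain g where "g \<in> avoiding_edges E B" "g - A = {v}"
      using v(2) unfolding linear_vars_def by blast
    then show ?thesis using v(1) by auto
  qed (use v in blast)
qed

definition blocked :: "'n set set \<Rightarrow> 'n set \<Rightarrow> 'n set \<Rightarrow> 'n \<Rightarrow> bool" where
  "blocked E A B u \<longleftrightarrow> u \<notin> A \<and> u \<notin> B \<and> (\<forall>g\<in>E. u \<in> g \<longrightarrow> g \<inter> B \<noteq> {})"

definition pivot_candidate :: "'n set set \<Rightarrow> 'n set \<Rightarrow> 'n set \<Rightarrow> 'n \<Rightarrow> bool" where
  "pivot_candidate E A B y \<longleftrightarrow>
     y \<notin> A \<and> y \<notin> B \<and> (\<forall>g\<in>avoiding_edges E B. y \<in> g \<longrightarrow> (\<exists>x\<in>g. x \<notin> A \<and> x \<noteq> y))"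

definition dominated_later ::
  "'n set set \<Rightarrow> 'n set \<Rightarrow> 'n set \<Rightarrow> ('n \<Rightarrow> 'n set) \<Rightarrow> ('n \<Rightarrow> bool) \<Rightarrow> 'n \<Rightarrow> bool" where
  "dominated_later E A B d R b \<longleftrightarrow>
     {b} \<in> E \<or> (\<exists>u. neighbors E u b \<and> ((\<exists>a\<in>A. u \<in> d a) \<or> blocked E A B u \<or> R u))"

text \<open>Invariant of the splitting recursion at \<open>(I(E) : x\<^sup>A) + (x\<^sub>b : b \<in> B)\<close>. The edges \<open>d a\<close>,
  \<open>a \<in> A\<close>, will belong to an edgewise dominant set, together with one edge through each vertex
  outside \<open>A \<union> B\<close> and the linear variables; blocked vertices and the pending pivot \<open>p\<close> are among
  the latter, so their neighbours in \<open>B\<close> are dominated.\<close>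

definition split_invariant ::
  "'n set \<Rightarrow> 'n set set \<Rightarrow> 'n set \<Rightarrow> 'n set \<Rightarrow> ('n \<Rightarrow> 'n set) \<Rightarrow> 'n option \<Rightarrow> bool" where
  "split_invariant V E A B d p \<longleftrightarrow>
     A \<inter> B = {} \<and> A \<subseteq> red_vertices V E \<and> B \<subseteq> red_vertices V E
     \<and> (\<forall>a\<in>A. d a \<in> E \<and> a \<in> d a)
     \<and> (\<forall>b\<in>B. dominated_later E A B d (\<lambda>u. p = Some u) b)
     \<and> (\<forall>y. p = Some y \<longrightarrow> pivot_candidate E A B y)"

lemma split_invariant_empty: "split_invariant V E {} {} d None"
  by (simp add: split_invariant_def)

lemma red_vertices_memI: "clutter V E \<Longrightarrow> g \<in> E \<Longrightarrow> v \<in> g \<Longrightarrow> v \<in> red_vertices V E"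
  unfolding clutter_def red_vertices_def by blast

lemma linear_vars_subset: "clutter V E \<Longrightarrow> linear_vars E A B \<subseteq> red_vertices V E"
proof
  fix v assume "clutter V E" "v \<in> linear_vars E A B"
  then obtain g where "g \<in> E" "v \<in> g" unfolding linear_vars_def avoiding_edges_def by blast
  then show "v \<in> red_vertices V E" using red_vertices_memI[OF \<open>clutter V E\<close>] by blast
qed

lemma not_mem_linear_vars:
  assumes "blocked E A B u \<or> pivot_candidate E A B u"
  shows "u \<notin> linear_vars E A B"
proof
  assume "u \<in> linear_vars E A B"
  then obtain g where g: "g \<in> avoiding_edges E B" "g - A = {u}" unfolding linear_vars_def by blast
  then show False
    using assms unfolding blocked_def pivot_candidate_def avoiding_edges_def by blast
qed

lemma split_invariantD:
  assumes "split_invariant V E A B d p"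
  shows "A \<inter> B = {}" "A \<subseteq> red_vertices V E" "B \<subseteq> red_vertices V E"
    "\<And>a. a \<in> A \<Longrightarrow> d a \<in> E" "\<And>a. a \<in> A \<Longrightarrow> a \<in> d a"
    "\<And>b. b \<in> B \<Longrightarrow> dominated_later E A B d (\<lambda>u. p = Some u) b"
    "\<And>y. p = Some y \<Longrightarrow> pivot_candidate E A B y"
  using assms unfolding split_invariant_def by auto

lemma split_invariant_neighbor:
  assumes cl: "clutter V E" and I: "split_invariant V E A B d p"
    and v: "v \<in> B \<union> linear_vars E A B" "{v} \<notin> E"
  obtains u where "neighbors E u v"
    "(\<exists>a\<in>A. u \<in> d a) \<or> u \<in> red_vertices V E - A - B - linear_vars E A B"
proof (cases "v \<in> B")
  case True
  then have "dominated_later E A B d (\<lambda>u. p = Some u) v" by (rule split_invariantD(6)[OF I])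
  then obtain u where u: "neighbors E u v" "(\<exists>a\<in>A. u \<in> d a) \<or> blocked E A B u \<or> p = Some u"
    using v(2) unfolding dominated_later_def by blast
  have "u \<in> red_vertices V E - A - B - linear_vars E A B" if "\<not> (\<exists>a\<in>A. u \<in> d a)"
  proof -
    have bp: "blocked E A B u \<or> pivot_candidate E A B u"
      using u(2) that split_invariantD(7)[OF I] by blast
    then have "u \<notin> linear_vars E A B" by (rule not_mem_linear_vars)
    moreover have "u \<notin> A" "u \<notin> B" using bp unfolding blocked_def pivot_candidate_def by auto
    moreover have "u \<in> red_vertices V E"
      using u(1) red_vertices_memI[OF cl] unfolding neighbors_def by blast
    ultimately show ?thesis by blast
  qed
  then show thesis using that u(1) by blast
next
  case False
  then obtain g where g: "g \<in> E" "g - A = {v}"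
    using v(1) unfolding linear_vars_def avoiding_edges_def by blast
  moreover have "g \<noteq> {v}" using v(2) g(1) by blast
  ultimately obtain a where "a \<in> A" "a \<in> g" "a \<noteq> v" by blast
  then show thesis using that g split_invariantD(5)[OF I] unfolding neighbors_def by blast
qed

lemma split_invariant_dominating_set:
  fixes V :: "'n::finite set"
  assumes cl: "clutter V E" and I: "split_invariant V E A B d p"
  obtains F where "edgewise_dominant V E F"
    "card F \<le> card A + card (red_vertices V E - A - B - linear_vars E A B)"
proof -
  define Free where "Free = red_vertices V E - A - B - linear_vars E A B"
  define f where "f v = (SOME e. e \<in> E \<and> v \<in> e)" for v
  have f: "f v \<in> E" "v \<in> f v" if "v \<in> red_vertices V E" for v
    using that someI_ex[of "\<lambda>e. e \<in> E \<and> v \<in> e"] unfolding red_vertices_def f_def by blast+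
  define F where "F = d ` A \<union> f ` Free"
  have in_F: "\<exists>e\<in>F. u \<in> e" if "u \<in> A \<or> u \<in> Free \<or> (\<exists>a\<in>A. u \<in> d a)" for u
  proof -
    have "u \<in> Free \<Longrightarrow> u \<in> f u" using f(2) unfolding Free_def by blast
    then show ?thesis using that split_invariantD(5)[OF I] unfolding F_def by blast
  qed
  have "edgewise_dominant V E F"
    unfolding edgewise_dominant_def
  proof (intro conjI ballI impI)
    show "F \<subseteq> E" unfolding F_def Free_def using split_invariantD(4)[OF I] f(1) by blast
    fix v assume "v \<in> red_vertices V E" and nv: "\<not> (\<exists>e\<in>F. v \<in> e) \<and> \<not> (\<exists>e\<in>E. e = {v})"
    then have "v \<in> B \<union> linear_vars E A B" "{v} \<notin> E" using in_F[of v] unfolding Free_def by blast+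
    then show "\<exists>u. neighbors E u v \<and> (\<exists>e\<in>F. u \<in> e)"
      using split_invariant_neighbor[OF cl I] in_F unfolding Free_def by metis
  qed
  moreover have "card F \<le> card A + card Free"
    unfolding F_def by (meson add_mono card_Un_le card_image_le finite le_trans)
  ultimately show thesis using that unfolding Free_def by blast
qed

lemma card_linear_vars_le:
  fixes V :: "'n::finite set"
  assumes cl: "clutter V E" and I: "split_invariant V E A B d p"
  shows "card (B \<union> linear_vars E A B) + epsilon V E \<le> card (red_vertices V E)"
proof -
  let ?Vr = "red_vertices V E" and ?Q = "linear_vars E A B"
  let ?Free = "?Vr - A - B - ?Q"
  obtain F where F: "edgewise_dominant V E F" "card F \<le> card A + card ?Free"
    using split_invariant_dominating_set[OF cl I] .
  have "epsilon V E \<le> card F"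
    unfolding epsilon_def using F(1) by (intro Least_le) blast
  have AB: "A \<inter> B = {}" "A \<subseteq> ?Vr" "B \<subseteq> ?Vr" using split_invariantD(1-3)[OF I] .
  have Q: "?Q \<subseteq> ?Vr" "A \<inter> ?Q = {}"
    using linear_vars_subset[OF cl] unfolding linear_vars_def by blast+
  have "?Vr = (A \<union> (B \<union> ?Q)) \<union> ?Free" using AB Q by blast
  also have "card \<dots> = card (A \<union> (B \<union> ?Q)) + card ?Free"
    by (rule card_Un_disjoint) auto
  also have "card (A \<union> (B \<union> ?Q)) = card A + card (B \<union> ?Q)"
    by (rule card_Un_disjoint) (use AB Q in auto)
  finally show ?thesis using F(2) \<open>epsilon V E \<le> card F\<close> by linarith
qed

lemma dominated_later_mono:
  assumes "dominated_later E A B d R b" "\<And>u. R u \<Longrightarrow> blocked E A B u \<or> R' u"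
  shows "dominated_later E A B d R' b"
  using assms unfolding dominated_later_def by blast

lemma blocked_insert:
  assumes "blocked E A B u" "g \<in> avoiding_edges E B" "x \<in> g"
  shows "blocked E (insert x A) B u" "blocked E A (insert x B) u"
  using assms unfolding blocked_def avoiding_edges_def by blast+

lemma split_invariant_obtain_pivot:
  assumes I: "split_invariant V E A B d p" and "\<not> covers (colon_plus_gens E A B) {}"
    and g0: "g0 \<in> avoiding_edges E B" "(g0 - A) \<inter> linear_vars E A B = {}"
  obtains g x y where "g \<in> avoiding_edges E B" "x \<in> g" "y \<in> g" "x \<notin> A" "x \<noteq> y"
    "pivot_candidate E A B y" "\<And>b. b \<in> B \<Longrightarrow> dominated_later E A B d (\<lambda>u. u = y) b"
proof (cases "\<exists>y g. p = Some y \<and> g \<in> avoiding_edges E B \<and> y \<in> g")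
  case True
  then obtain y g where y: "p = Some y" "g \<in> avoiding_edges E B" "y \<in> g" by blast
  have "pivot_candidate E A B y" using split_invariantD(7)[OF I y(1)] .
  moreover from this obtain x where "x \<in> g" "x \<notin> A" "x \<noteq> y"
    using y unfolding pivot_candidate_def by blast
  moreover have "dominated_later E A B d (\<lambda>u. u = y) b" if "b \<in> B" for b
    by (rule dominated_later_mono[OF split_invariantD(6)[OF I that]]) (use y(1) in simp)
  ultimately show thesis using that y by blast
next
  case False
  obtain y where y: "y \<in> g0" "y \<notin> A"
    using g0(1) assms(2) unfolding covers_colon_plus_gens by blast
  have "pivot_candidate E A B y"
    unfolding pivot_candidate_def
  proof (intro conjI ballI impI)
    show "y \<notin> A" "y \<notin> B" using y g0(1) unfolding avoiding_edges_def by blast+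
    fix g assume "g \<in> avoiding_edges E B" "y \<in> g"
    moreover have "y \<notin> linear_vars E A B" using g0(2) y by blast
    ultimately show "\<exists>x\<in>g. x \<notin> A \<and> x \<noteq> y" using y(2) unfolding linear_vars_def by blast
  qed
  moreover from this obtain x where "x \<in> g0" "x \<notin> A" "x \<noteq> y"
    using g0(1) y(1) unfolding pivot_candidate_def by blast
  moreover have "dominated_later E A B d (\<lambda>u. u = y) b" if "b \<in> B" for b
  proof (rule dominated_later_mono[OF split_invariantD(6)[OF I that]])
    fix u assume "p = Some u"
    then have "pivot_candidate E A B u" by (rule split_invariantD(7)[OF I])
    then show "blocked E A B u \<or> u = y"
      using False \<open>p = Some u\<close> unfolding pivot_candidate_def blocked_def avoiding_edges_def by blast
  qed
  ultimately show thesis using that g0(1) y(1) by blast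
qed

lemma split_invariant_colon:
  assumes I: "split_invariant V E A B d p" and cl: "clutter V E"
    and g: "g \<in> avoiding_edges E B" "x \<in> g" "y \<in> g" "x \<notin> A"
    and dom: "\<And>b. b \<in> B \<Longrightarrow> dominated_later E A B d (\<lambda>u. u = y) b"
  shows "split_invariant V E (insert x A) B (d(x := g)) None"
  unfolding split_invariant_def
proof (intro conjI ballI allI impI)
  have "g \<in> E" "x \<notin> B" using g unfolding avoiding_edges_def by blast+
  then show "insert x A \<inter> B = {}" "insert x A \<subseteq> red_vertices V E" "B \<subseteq> red_vertices V E"
    using split_invariantD(1-3)[OF I] red_vertices_memI[OF cl _ g(2)] by auto
  show "(d(x := g)) a \<in> E" "a \<in> (d(x := g)) a" if "a \<in> insert x A" for a
    using that \<open>g \<in> E\<close> g(2) split_invariantD(4,5)[OF I] by auto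
  fix b assume "b \<in> B"
  from dom[OF this] consider "{b} \<in> E" | u where "neighbors E u b"
      "(\<exists>a\<in>A. u \<in> d a) \<or> blocked E A B u \<or> u = y"
    unfolding dominated_later_def by blast
  then show "dominated_later E (insert x A) B (d(x := g)) (\<lambda>u. None = Some u) b"
  proof cases
    case (2 u)
    have "(\<exists>a\<in>insert x A. u \<in> (d(x := g)) a) \<or> blocked E (insert x A) B u"
      using 2(2)
    proof (elim disjE)
      assume "\<exists>a\<in>A. u \<in> d a"
      then obtain a where "a \<in> A" "u \<in> d a" by blast
      moreover have "a \<noteq> x" using \<open>a \<in> A\<close> g(4) by blast
      ultimately show ?thesis by auto
    qed (use g blocked_insert(1)[OF _ g(1,2)] in auto)
    then show ?thesis using 2(1) unfolding dominated_later_def by blast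
  qed (simp add: dominated_later_def)
qed simp

lemma split_invariant_plus:
  assumes I: "split_invariant V E A B d p" and cl: "clutter V E"
    and g: "g \<in> avoiding_edges E B" "x \<in> g" "y \<in> g" "x \<notin> A" "x \<noteq> y"
    and y: "pivot_candidate E A B y"
    and dom: "\<And>b. b \<in> B \<Longrightarrow> dominated_later E A B d (\<lambda>u. u = y) b"
  shows "split_invariant V E A (insert x B) d (Some y)"
  unfolding split_invariant_def
proof (intro conjI ballI allI impI)
  have "g \<in> E" using g unfolding avoiding_edges_def by blast
  then show "A \<inter> insert x B = {}" "A \<subseteq> red_vertices V E" "insert x B \<subseteq> red_vertices V E"
    using split_invariantD(1-3)[OF I] red_vertices_memI[OF cl _ g(2)] g(4) by auto
  show "d a \<in> E" "a \<in> d a" if "a \<in> A" for a using that split_invariantD(4,5)[OF I] by auto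
  show "pivot_candidate E A (insert x B) y'" if "Some y = Some y'" for y'
    using that y g(5) unfolding pivot_candidate_def avoiding_edges_def by auto
  fix b assume b: "b \<in> insert x B"
  show "dominated_later E A (insert x B) d (\<lambda>u. Some y = Some u) b"
  proof (cases "b = x")
    case True
    have "neighbors E y x" using g \<open>g \<in> E\<close> unfolding neighbors_def by blast
    then show ?thesis using True unfolding dominated_later_def by blast
  next
    case False
    then consider "{b} \<in> E" | u where "neighbors E u b"
        "(\<exists>a\<in>A. u \<in> d a) \<or> blocked E A B u \<or> u = y"
      using dom b unfolding dominated_later_def by blast
    then show ?thesis
    proof cases
      case (2 u)
      then show ?thesis using blocked_insert(2)[OF _ g(1,2)] unfolding dominated_later_def by blast
    qed (simp add: dominated_later_def)
  qed
qed

definition admissible_steps :: "'n set \<Rightarrow> 'n set set \<Rightarrow> 'n set \<Rightarrow> ('n set \<times> 'n set) list \<Rightarrow> bool" where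
  "admissible_steps V E A L \<longleftrightarrow>
     (\<forall>(U, Q)\<in>set L. U \<inter> A = {} \<and> Q \<inter> A = {} \<and> card Q + epsilon V E \<le> card (red_vertices V E))"

lemma prime_filtration_colon_plus_gens_split:
  assumes x: "x \<notin> A" "x \<notin> B"
    and L1: "prime_filtration (colon_plus_gens E (insert x A) B) L1" "admissible_steps V E (insert x A) L1"
    and L2: "prime_filtration (colon_plus_gens E A (insert x B)) L2" "admissible_steps V E A L2"
  defines "L \<equiv> map (\<lambda>(U, Q). (insert x U, Q)) L1 @ L2"
  shows "prime_filtration (colon_plus_gens E A B) L" "admissible_steps V E A L"
proof -
  have "prime_filtration ((\<lambda>g. g - {x}) ` colon_plus_gens E A B) L1"
    using L1(1) colon_plus_gens_colon[OF x(2)] by simp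
  moreover have "\<forall>(U, Q)\<in>set L1. x \<notin> U \<and> x \<notin> Q"
    using L1(2) unfolding admissible_steps_def by blast
  moreover have "prime_filtration (insert {x} (colon_plus_gens E A B)) L2"
    using L2(1) prime_filtration_cong covers_colon_plus_gens_plus[OF x(1)] by blast
  ultimately show "prime_filtration (colon_plus_gens E A B) L"
    unfolding L_def by (rule prime_filtration_split)
  show "admissible_steps V E A L"
    using L1(2) L2(2) x(1) unfolding admissible_steps_def L_def by auto
qed

lemma split_invariant_prime_filtration:
  fixes V :: "'n::finite set"
  assumes cl: "clutter V E"
  shows "split_invariant V E A B d p \<Longrightarrow>
    \<exists>L. prime_filtration (colon_plus_gens E A B) L \<and> admissible_steps V E A L"
proof (induction "card (- (A \<union> B))" arbitrary: A B d p rule: less_induct)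
  case less
  note I = less.prems
  consider (unit) "covers (colon_plus_gens E A B) {}"
    | (prime) "\<forall>g\<in>avoiding_edges E B. (g - A) \<inter> linear_vars E A B \<noteq> {}"
    | (split) g0 where "\<not> covers (colon_plus_gens E A B) {}"
        "g0 \<in> avoiding_edges E B" "(g0 - A) \<inter> linear_vars E A B = {}"
    by blast
  then show ?case
  proof cases
    case unit
    then show ?thesis by (intro exI[of _ "[]"]) (simp add: admissible_steps_def)
  next
    case prime
    have "B \<union> linear_vars E A B \<subseteq> - A"
      using split_invariantD(1)[OF I] unfolding linear_vars_def by blast
    then show ?thesis
      using colon_eq_var_ideal_colon_plus_gens[OF prime] card_linear_vars_le[OF cl I]
      by (intro exI[of _ "[({}, B \<union> linear_vars E A B)]"])
        (auto simp: admissible_steps_def covers_insert)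
  next
    case split
    obtain g x y where g: "g \<in> avoiding_edges E B" "x \<in> g" "y \<in> g" "x \<notin> A" "x \<noteq> y"
      and y: "pivot_candidate E A B y" and dom: "\<And>b. b \<in> B \<Longrightarrow> dominated_later E A B d (\<lambda>u. u = y) b"
      by (rule split_invariant_obtain_pivot[OF I split]) blast
    have "x \<notin> B" using g(1,2) unfolding avoiding_edges_def by blast
    then have smaller: "card (- (insert x A \<union> B)) < card (- (A \<union> B))"
      "card (- (A \<union> insert x B)) < card (- (A \<union> B))"
      using g(4) by (auto intro!: psubset_card_mono)
    obtain L1 where L1: "prime_filtration (colon_plus_gens E (insert x A) B) L1"
      "admissible_steps V E (insert x A) L1"
      using less.hyps[OF smaller(1) split_invariant_colon[OF I cl g(1-4) dom]] by blast
    obtain L2 where L2: "prime_filtration (colon_plus_gens E A (insert x B)) L2"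
      "admissible_steps V E A L2"
      using less.hyps[OF smaller(2) split_invariant_plus[OF I cl g y dom]] by blast
    show ?thesis using prime_filtration_colon_plus_gens_split[OF g(4) \<open>x \<notin> B\<close> L1 L2] by blast
  qed
qed

lemma dim_quot_var_ideal_ge_epsilon:
  fixes V :: "'n::finite set"
  assumes "card Q + epsilon V E \<le> card (red_vertices V E)"
  shows "enat (epsilon V E + card (UNIV :: 'n set) - card (red_vertices V E))
    \<le> dim_quot (var_ideal Q :: ('n, 'k::field) mpoly set)"
proof -
  have "card (red_vertices V E) \<le> card (UNIV :: 'n set)" by (rule card_mono) auto
  then have "epsilon V E + card (UNIV :: 'n set) - card (red_vertices V E) \<le> card (UNIV :: 'n set) - card Q"
    using assms by linarith
  then show ?thesis using dim_quot_var_ideal[of Q] order_trans enat_ord_simps(1) by blast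
qed

theorem corollary3p8:
  fixes V :: "'n::finite set" and E :: "'n set set"
  assumes "clutter V E"
  shows "\<exists>(m::nat) (J :: nat \<Rightarrow> ('n, 'k::field) mpoly set) (P :: nat \<Rightarrow> ('n, 'k) mpoly set)
            (a :: nat \<Rightarrow> ('n \<Rightarrow>\<^sub>0 nat)).
           J 0 = edge_ideal E \<and> J m = UNIV
         \<and> (\<forall>i\<le>m. graded_ideal (J i) \<and> edge_ideal E \<subseteq> J i)
         \<and> (\<forall>i<m. J i \<subseteq> J (Suc i))
         \<and> (\<forall>i\<in>{1..m}. monomial_prime (P i) \<and> squarefree_vec (a i)
              \<and> graded_quot_iso (J i) (J (i - 1)) (P i) (a i)
              \<and> dim_quot (P i) \<ge> enat (epsilon V E + card (UNIV :: 'n set) - card (red_vertices V E)))"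
proof -
  obtain L where L: "prime_filtration E L" and adm: "admissible_steps V E {} L"
    using split_invariant_prime_filtration[OF assms split_invariant_empty] colon_plus_gens_empty by metis
  obtain J :: "nat \<Rightarrow> ('n, 'k) mpoly set" where J: "J 0 = sqfree_ideal E" "J (length L) = UNIV"
    "\<And>i. graded_ideal (J i)" "\<And>i. J i \<subseteq> J (Suc i)"
    "\<And>i. i < length L \<Longrightarrow> graded_quot_iso (J (Suc i)) (J i) (var_ideal (snd (L ! i))) (char_vec (fst (L ! i)))"
    using prime_filtration_graded_filtration[OF L] by blast
  define P where "P i = (var_ideal (snd (L ! (i - 1))) :: ('n, 'k) mpoly set)" for i
  define a where "a i = char_vec (fst (L ! (i - 1)))" for i
  have "edge_ideal E \<subseteq> J i" for i
    using J(1,4) lift_Suc_mono_le[of J 0 i] by (simp add: edge_ideal_eq_sqfree_ideal)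
  moreover have "monomial_prime (P i) \<and> squarefree_vec (a i) \<and> graded_quot_iso (J i) (J (i - 1)) (P i) (a i)
      \<and> dim_quot (P i) \<ge> enat (epsilon V E + card (UNIV :: 'n set) - card (red_vertices V E))"
    if i: "i \<in> {1..length L}" for i
  proof -
    obtain j where j: "i = Suc j" "j < length L" using i by (cases i) auto
    then have "card (snd (L ! j)) + epsilon V E \<le> card (red_vertices V E)"
      using adm nth_mem unfolding admissible_steps_def by fastforce
    then have "enat (epsilon V E + card (UNIV :: 'n set) - card (red_vertices V E)) \<le> dim_quot (P i)"
      unfolding P_def j(1) by (simp add: dim_quot_var_ideal_ge_epsilon)
    moreover have "monomial_prime (P i)" "squarefree_vec (a i)"
      unfolding P_def a_def by (simp_all add: monomial_prime_var_ideal squarefree_vec_char_vec)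
    ultimately show ?thesis using J(5)[OF j(2)] unfolding P_def a_def j(1) by simp
  qed
  ultimately show ?thesis
    using J(1-4) by (intro exI[of _ "length L"] exI[of _ J] exI[of _ P] exI[of _ a])
      (simp add: edge_ideal_eq_sqfree_ideal)
qed

end
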